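(* Define \[ \omega(z;q):=\sum_{n=0}^{\infty} \frac{z^n q^{2n^2+2n}}{(q;q^2)_{n+1}\,(zq;q^2)_{n+1}}. \] Then, as formal power series in $q$ whose coefficients are polynomials in $z$ (equivalently, for $|q|<1$ and $|z|$ sufficiently small), \[ \omega(z;q)=\sum_{n=0}^{\infty} \frac{q^n}{(zq;q^2)_{n+1}}. \]
   Context: For $a$ and $q$, $(a;q)_0:=1$, $(a;q)_n:=(1-a)(1-aq)\cdots(1-aq^{n-1})$ for $n\ge1$. *)

theory Defs
  imports Complex_Main
begin

definition qpoch :: "complex \<Rightarrow> complex \<Rightarrow> nat \<Rightarrow> complex" where
  "qpoch a q n = (\<Prod>k<n. (1 - a * q ^ k))"

definition omega_term :: "complex \<Rightarrow> complex \<Rightarrow> nat \<Rightarrow> complex" where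
  "omega_term z q n = z ^ n * q ^ (2 * n\<^sup>2 + 2 * n) /
       (qpoch q (q\<^sup>2) (n + 1) * qpoch (z * q) (q\<^sup>2) (n + 1))"

definition omega :: "complex \<Rightarrow> complex \<Rightarrow> complex" where
  "omega z q = (\<Sum>n. omega_term z q n)"

end

theory Submission
  imports Defs "HOL-Analysis.Infinite_Products"
begin

text \<open>Write \<open>\<omega>(z)\<close> for \<open>\<omega>(z;q)\<close>. The \<open>n\<close>-th summand of \<open>\<omega>(z) (1 - z q) - q \<omega>(z q\<^sup>2)\<close> is
  \<open>C\<^sub>n - C\<^sub>n\<^sub>+\<^sub>1\<close> with \<open>C\<^sub>n = z\<^sup>n q\<^bsup>2n\<^sup>2+2n\<^esup> / ((q;q\<^sup>2)\<^sub>n (z q\<^sup>3;q\<^sup>2)\<^sub>n)\<close>, so the series telescopes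
  to \<open>C\<^sub>0 = 1\<close> and \<open>\<omega>(z) (1 - z q) = 1 + q \<omega>(z q\<^sup>2)\<close>. Iterating this \<open>N\<close> times writes \<open>\<omega>(z)\<close>
  as the \<open>N\<close>-th partial sum of \<open>\<Sum> q\<^sup>n / (z q;q\<^sup>2)\<^sub>n\<^sub>+\<^sub>1\<close> plus the remainder
  \<open>q\<^sup>N \<omega>(z q\<^bsup>2N\<^esup>) / (z q;q\<^sup>2)\<^sub>N\<close>. For \<open>|z| \<le> (1 - |q|)/2\<close> every denominator
  \<open>(z q\<^bsup>2N+1\<^esup>;q\<^sup>2)\<^sub>n\<close> has modulus at least \<open>1/2\<close>, so the values of \<open>\<omega>\<close> in the remainder are
  bounded by one summable majorant and the remainder tends to \<open>0\<close>.\<close>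

lemma norm_prod_one_minus_ge:
  fixes c :: "'a \<Rightarrow> 'b::real_normed_field"
  assumes "\<And>k. k \<in> A \<Longrightarrow> norm (c k) \<le> 1"
  shows "(\<Prod>k\<in>A. 1 - norm (c k)) \<le> norm (\<Prod>k\<in>A. 1 - c k)"
proof -
  have "1 - norm (c k) \<le> norm (1 - c k)" for k
    using norm_triangle_ineq2[of 1 "c k"] by simp
  then have "(\<Prod>k\<in>A. 1 - norm (c k)) \<le> (\<Prod>k\<in>A. norm (1 - c k))"
    using assms by (intro prod_mono) auto
  then show ?thesis
    by (simp add: prod_norm)
qed

lemma norm_prod_one_minus_ge_one_minus_sum:
  fixes c :: "'a \<Rightarrow> 'b::real_normed_field"
  assumes "\<And>k. k \<in> A \<Longrightarrow> norm (c k) \<le> 1"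
  shows "1 - (\<Sum>k\<in>A. norm (c k)) \<le> norm (\<Prod>k\<in>A. 1 - c k)"
  using Weierstrass_prod_ineq[of A "\<lambda>k. norm (c k)"] norm_prod_one_minus_ge[of A c] assms
  by fastforce

lemma qpoch_0 [simp]: "qpoch a b 0 = 1"
  by (simp add: qpoch_def)

lemma qpoch_Suc: "qpoch a b (Suc n) = qpoch a b n * (1 - a * b ^ n)"
  by (simp add: qpoch_def)

lemma qpoch_Suc_shift: "qpoch a b (Suc n) = (1 - a) * qpoch (a * b) b n"
  unfolding qpoch_def prod.lessThan_Suc_shift by (simp add: mult.assoc)

lemma norm_qpoch_ge:
  assumes b: "norm b < 1" and a: "norm a \<le> 1 - norm b"
  shows "1 - norm a / (1 - norm b) \<le> norm (qpoch a b n)"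
proof -
  have "(\<Sum>k<n. norm (a * b ^ k)) = norm a * (\<Sum>k<n. norm b ^ k)"
    by (simp add: norm_mult norm_power sum_distrib_left)
  also have "\<dots> = norm a * ((1 - norm b ^ n) / (1 - norm b))"
    using b by (simp add: sum_gp_strict)
  also have "\<dots> \<le> norm a / (1 - norm b)"
    using b by (simp add: mult_left_le divide_right_mono)
  finally have sum: "(\<Sum>k<n. norm (a * b ^ k)) \<le> norm a / (1 - norm b)" .
  have "norm a \<le> 1"
    using a norm_ge_zero[of b] by linarith
  then have "norm (a * b ^ k) \<le> 1" for k
    using b by (auto simp: norm_mult norm_power intro!: mult_le_one power_le_one)
  then have "1 - (\<Sum>k<n. norm (a * b ^ k)) \<le> norm (qpoch a b n)"
    unfolding qpoch_def by (rule norm_prod_one_minus_ge_one_minus_sum)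
  with sum show ?thesis
    by linarith
qed

lemma norm_qpoch_ge_power:
  assumes a: "norm a \<le> 1" and b: "norm b \<le> 1"
  shows "(1 - norm a) ^ n \<le> norm (qpoch a b n)"
proof -
  have ab: "norm (a * b ^ k) \<le> norm a" for k
    using b by (simp add: norm_mult norm_power mult_left_le power_le_one)
  have "(1 - norm a) ^ n = (\<Prod>k<n. 1 - norm a)"
    by simp
  also have "\<dots> \<le> (\<Prod>k<n. 1 - norm (a * b ^ k))"
    using a ab by (intro prod_mono) (auto simp: algebra_simps)
  also have "\<dots> \<le> norm (qpoch a b n)"
    unfolding qpoch_def using a ab by (intro norm_prod_one_minus_ge) (blast intro: order_trans)
  finally show ?thesis .
qed

lemma norm_qpoch_ge_half:
  assumes q: "norm q < 1" and w: "norm w \<le> (1 - norm q) / 2"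
  shows "1/2 \<le> norm (qpoch (w * q) (q\<^sup>2) n)"
proof -
  have "2 * norm w \<le> 1 - norm q"
    using w by simp
  then have "2 * norm (w * q) \<le> (1 - norm q) * norm q"
    using mult_right_mono[of "2 * norm w" "1 - norm q" "norm q"] by (simp add: norm_mult)
  also have "\<dots> \<le> (1 - norm q) * (1 + norm q)"
    using q by (intro mult_left_mono) auto
  also have "\<dots> = 1 - norm (q\<^sup>2)"
    by (simp add: norm_mult norm_power power2_eq_square algebra_simps)
  finally have wq: "2 * norm (w * q) \<le> 1 - norm (q\<^sup>2)" .
  have q2: "norm (q\<^sup>2) < 1"
    using q by (simp add: norm_power power_less_one_iff)
  then have "norm (w * q) / (1 - norm (q\<^sup>2)) \<le> 1/2"
    using wq by (simp add: divide_simps)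
  moreover have "1 - norm (w * q) / (1 - norm (q\<^sup>2)) \<le> norm (qpoch (w * q) (q\<^sup>2) n)"
    using wq q2 by (intro norm_qpoch_ge) auto
  ultimately show ?thesis
    by linarith
qed

lemma norm_mult_q2_power_le:
  fixes q w :: complex
  assumes q: "norm q < 1" and w: "norm w \<le> (1 - norm q) / 2"
  shows "norm (w * (q\<^sup>2) ^ N) \<le> (1 - norm q) / 2"
proof -
  have "norm ((q\<^sup>2) ^ N) \<le> 1"
    using q by (simp add: norm_power power_le_one)
  then have "norm (w * (q\<^sup>2) ^ N) \<le> norm w"
    by (simp add: norm_mult mult_left_le)
  with w show ?thesis
    by linarith
qed

definition omega_majorant :: "real \<Rightarrow> nat \<Rightarrow> real" where
  "omega_majorant s n = 2 * s ^ (2 * n\<^sup>2 + 2 * n) / (1 - s) ^ (n + 1)"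

lemma summable_omega_majorant:
  assumes s: "0 \<le> s" "s < 1"
  shows "summable (omega_majorant s)"
proof -
  obtain N where N: "s ^ N < (1 - s) / 2"
    using real_arch_pow_inv[of "(1 - s) / 2" s] s by auto
  show ?thesis
  proof (rule summable_ratio_test[of "1/2" N])
    fix n assume "N \<le> n"
    then have "s ^ (4 * n + 4) \<le> s ^ N"
      using s by (intro power_decreasing) auto
    then have ratio: "s ^ (4 * n + 4) / (1 - s) \<le> 1/2"
      using N s by (simp add: field_simps)
    have "2 * (Suc n)\<^sup>2 + 2 * Suc n = (2 * n\<^sup>2 + 2 * n) + (4 * n + 4)"
      by (simp add: power2_eq_square algebra_simps)
    then have "omega_majorant s (Suc n)
        = 2 * (s ^ (2 * n\<^sup>2 + 2 * n) * s ^ (4 * n + 4)) / ((1 - s) ^ (n + 1) * (1 - s))"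
      unfolding omega_majorant_def by (simp only: power_add) simp
    also have "\<dots> = omega_majorant s n * (s ^ (4 * n + 4) / (1 - s))"
      by (simp add: omega_majorant_def)
    also have "\<dots> \<le> omega_majorant s n * (1/2)"
      using s by (intro mult_left_mono[OF ratio]) (simp add: omega_majorant_def)
    finally show "norm (omega_majorant s (Suc n)) \<le> 1/2 * norm (omega_majorant s n)"
      using s by (simp add: omega_majorant_def)
  qed simp
qed

lemma norm_quotient_le_omega_majorant:
  fixes q w A B :: complex
  assumes q: "norm q < 1" and w: "norm w \<le> 1"
    and A: "(1 - norm q) ^ (n + 1) \<le> norm A" and B: "1/2 \<le> norm B"
  shows "norm (w ^ n * q ^ (2 * n\<^sup>2 + 2 * n) / (A * B)) \<le> omega_majorant (norm q) n"
proof -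
  have "norm (w ^ n * q ^ (2 * n\<^sup>2 + 2 * n) / (A * B))
      = norm w ^ n * norm q ^ (2 * n\<^sup>2 + 2 * n) / (norm A * norm B)"
    by (simp add: norm_mult norm_divide norm_power)
  also have "\<dots> \<le> norm q ^ (2 * n\<^sup>2 + 2 * n) / ((1 - norm q) ^ (n + 1) / 2)"
  proof (rule frac_le)
    show "norm w ^ n * norm q ^ (2 * n\<^sup>2 + 2 * n) \<le> norm q ^ (2 * n\<^sup>2 + 2 * n)"
      using w by (simp add: mult_left_le_one_le power_le_one)
    show "(1 - norm q) ^ (n + 1) / 2 \<le> norm A * norm B"
      using mult_mono[OF A B] q by simp
  qed (use q in auto)
  also have "\<dots> = omega_majorant (norm q) n"
    by (simp add: omega_majorant_def)
  finally show ?thesis .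
qed

lemma norm_omega_term_le:
  assumes q: "norm q < 1" and w: "norm w \<le> (1 - norm q) / 2"
  shows "norm (omega_term w q n) \<le> omega_majorant (norm q) n"
  unfolding omega_term_def
proof (rule norm_quotient_le_omega_majorant[OF q])
  have "2 * norm w \<le> 1 - norm q"
    using w by simp
  then show "norm w \<le> 1"
    using norm_ge_zero[of q] by linarith
  show "(1 - norm q) ^ (n + 1) \<le> norm (qpoch q (q\<^sup>2) (n + 1))"
    using q by (intro norm_qpoch_ge_power) (auto simp: norm_power power_le_one)
  show "1/2 \<le> norm (qpoch (w * q) (q\<^sup>2) (n + 1))"
    by (rule norm_qpoch_ge_half[OF q w])
qed

lemma summable_omega_term:
  assumes q: "norm q < 1" and w: "norm w \<le> (1 - norm q) / 2"
  shows "summable (omega_term w q)"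
proof (rule summable_comparison_test'[where N = 0])
  show "summable (omega_majorant (norm q))"
    using q by (intro summable_omega_majorant) auto
  show "norm (omega_term w q n) \<le> omega_majorant (norm q) n" for n
    by (rule norm_omega_term_le[OF q w])
qed

lemma norm_omega_le:
  assumes q: "norm q < 1" and w: "norm w \<le> (1 - norm q) / 2"
  shows "norm (omega w q) \<le> suminf (omega_majorant (norm q))"
  unfolding omega_def using q
  by (intro norm_suminf_le norm_omega_term_le[OF q w] summable_omega_majorant) auto

definition omega_telescoper :: "complex \<Rightarrow> complex \<Rightarrow> nat \<Rightarrow> complex" where
  "omega_telescoper w q n =
     w ^ n * q ^ (2 * n\<^sup>2 + 2 * n) / (qpoch q (q\<^sup>2) n * qpoch (w * q ^ 3) (q\<^sup>2) n)"

lemma norm_omega_telescoper_le: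
  assumes q: "norm q < 1" and w: "norm w \<le> (1 - norm q) / 2"
  shows "norm (omega_telescoper w q n) \<le> omega_majorant (norm q) n"
  unfolding omega_telescoper_def
proof (rule norm_quotient_le_omega_majorant[OF q])
  have "2 * norm w \<le> 1 - norm q"
    using w by simp
  then show "norm w \<le> 1"
    using norm_ge_zero[of q] by linarith
  have "(1 - norm q) ^ (n + 1) \<le> (1 - norm q) ^ n"
    using q by (intro power_decreasing) auto
  also have "\<dots> \<le> norm (qpoch q (q\<^sup>2) n)"
    using q by (intro norm_qpoch_ge_power) (auto simp: norm_power power_le_one)
  finally show "(1 - norm q) ^ (n + 1) \<le> norm (qpoch q (q\<^sup>2) n)" .
  have "w * q ^ 3 = w * q\<^sup>2 * q"
    by (simp add: power3_eq_cube power2_eq_square)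
  moreover have "norm (w * q\<^sup>2) \<le> (1 - norm q) / 2"
    using norm_mult_q2_power_le[OF q w, of 1] by simp
  ultimately show "1/2 \<le> norm (qpoch (w * q ^ 3) (q\<^sup>2) n)"
    using norm_qpoch_ge_half[OF q] by metis
qed

lemma telescoping_identity:
  fixes c a x P Q w q u v t :: complex
  assumes "P \<noteq> 0" "Q \<noteq> 0" "u \<noteq> 0" "v \<noteq> 0" "t \<noteq> 0"
    and u: "u = 1 - q * x" and v: "v = 1 - w * q ^ 3 * x"
  shows "c * a / (P * u * (t * Q)) * t - q * (c * x * a / (P * u * (Q * v)))
       = c * a / (P * Q) - w * c * (a * q ^ 4 * x\<^sup>2) / (P * u * (Q * v))"
proof -
  have "c * a * v - q * (c * x * a) = c * a * u * v - w * c * (a * q ^ 4 * x\<^sup>2)"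
    unfolding u v by algebra
  with assms(1-5) show ?thesis
    by (simp add: field_simps)
qed

lemma omega_term_telescopes:
  assumes q: "norm q < 1" and w: "norm w \<le> (1 - norm q) / 2"
  shows "omega_term w q n * (1 - w * q) - q * omega_term (w * q\<^sup>2) q n
       = omega_telescoper w q n - omega_telescoper w q (Suc n)"
proof -
  define P where "P = qpoch q (q\<^sup>2) n"
  define Q where "Q = qpoch (w * q ^ 3) (q\<^sup>2) n"
  define x where "x = (q\<^sup>2) ^ n"
  define a where "a = q ^ (2 * n\<^sup>2 + 2 * n)"
  have cube: "w * q * q\<^sup>2 = w * q ^ 3" "w * q\<^sup>2 * q = w * q ^ 3"
    by (simp_all add: power3_eq_cube power2_eq_square)
  have P1: "qpoch q (q\<^sup>2) (Suc n) = P * (1 - q * x)"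
    by (simp add: qpoch_Suc P_def x_def)
  have Q1: "qpoch (w * q) (q\<^sup>2) (Suc n) = (1 - w * q) * Q"
    by (simp add: qpoch_Suc_shift Q_def cube)
  have Q2: "qpoch (w * q\<^sup>2 * q) (q\<^sup>2) (Suc n) = Q * (1 - w * q ^ 3 * x)"
    by (simp add: qpoch_Suc Q_def x_def cube)
  have w2: "norm (w * q\<^sup>2) \<le> (1 - norm q) / 2"
    using norm_mult_q2_power_le[OF q w, of 1] by simp
  have "0 < (1 - norm q) ^ Suc n"
    using q by simp
  also have "\<dots> \<le> norm (qpoch q (q\<^sup>2) (Suc n))"
    using q by (intro norm_qpoch_ge_power) (auto simp: norm_power power_le_one)
  finally have "P * (1 - q * x) \<noteq> 0"
    using P1 by auto
  moreover have "(1 - w * q) * Q \<noteq> 0"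
    using norm_qpoch_ge_half[OF q w, of "Suc n"] Q1 by auto
  moreover have "Q * (1 - w * q ^ 3 * x) \<noteq> 0"
    using norm_qpoch_ge_half[OF q w2, of "Suc n"] Q2 by auto
  ultimately have nonzero: "P \<noteq> 0" "Q \<noteq> 0" "1 - q * x \<noteq> 0" "1 - w * q ^ 3 * x \<noteq> 0" "1 - w * q \<noteq> 0"
    by auto
  have shifted_power: "(w * q\<^sup>2) ^ n = w ^ n * x"
    by (simp add: x_def power_mult_distrib)
  have next_exponent: "q ^ (2 * (Suc n)\<^sup>2 + 2 * Suc n) = a * q ^ 4 * x\<^sup>2"
  proof -
    have "2 * (Suc n)\<^sup>2 + 2 * Suc n = (2 * n\<^sup>2 + 2 * n) + 4 + 2 * n * 2"
      by (simp add: power2_eq_square algebra_simps)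
    then show ?thesis
      unfolding a_def x_def power_mult[symmetric] power_add[symmetric] by (simp only:)
  qed
  have "omega_term w q n * (1 - w * q) - q * omega_term (w * q\<^sup>2) q n
      = w ^ n * a / (P * (1 - q * x) * ((1 - w * q) * Q)) * (1 - w * q)
        - q * (w ^ n * x * a / (P * (1 - q * x) * (Q * (1 - w * q ^ 3 * x))))"
    unfolding omega_term_def Suc_eq_plus1[symmetric] P1 Q1 Q2 shifted_power a_def[symmetric] ..
  also have "\<dots> = w ^ n * a / (P * Q)
        - w * w ^ n * (a * q ^ 4 * x\<^sup>2) / (P * (1 - q * x) * (Q * (1 - w * q ^ 3 * x)))"
    by (rule telescoping_identity) (use nonzero in auto)
  also have "\<dots> = omega_telescoper w q n - omega_telescoper w q (Suc n)"
    unfolding omega_telescoper_def P1 qpoch_Suc[of "w * q ^ 3"] next_exponent power_Suc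
      P_def[symmetric] Q_def[symmetric] x_def[symmetric] a_def[symmetric] ..
  finally show ?thesis .
qed

lemma omega_functional_equation:
  assumes q: "norm q < 1" and w: "norm w \<le> (1 - norm q) / 2"
  shows "omega w q * (1 - w * q) = 1 + q * omega (w * q\<^sup>2) q"
proof -
  have w2: "norm (w * q\<^sup>2) \<le> (1 - norm q) / 2"
    using norm_mult_q2_power_le[OF q w, of 1] by simp
  have "omega_telescoper w q \<longlonglongrightarrow> 0"
  proof (rule Lim_null_comparison)
    show "\<forall>\<^sub>F n in sequentially. norm (omega_telescoper w q n) \<le> omega_majorant (norm q) n"
      using norm_omega_telescoper_le[OF q w] by simp
    show "omega_majorant (norm q) \<longlonglongrightarrow> 0"
      using q by (intro summable_LIMSEQ_zero summable_omega_majorant) auto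
  qed
  then have "(\<lambda>n. omega_telescoper w q n - omega_telescoper w q (Suc n)) sums 1"
    using telescope_sums'[of "omega_telescoper w q" 0] by (simp add: omega_telescoper_def)
  then have telescoped:
    "(\<lambda>n. omega_term w q n * (1 - w * q) - q * omega_term (w * q\<^sup>2) q n) sums 1"
    by (simp add: omega_term_telescopes[OF q w])
  have "omega_term w q sums omega w q" "omega_term (w * q\<^sup>2) q sums omega (w * q\<^sup>2) q"
    unfolding omega_def using summable_omega_term[OF q w] summable_omega_term[OF q w2]
    by (simp_all add: summable_sums)
  then have "(\<lambda>n. omega_term w q n * (1 - w * q) - q * omega_term (w * q\<^sup>2) q n)
      sums (omega w q * (1 - w * q) - q * omega (w * q\<^sup>2) q)"
    by (intro sums_diff sums_mult sums_mult2)
  from sums_unique2[OF this telescoped] show ?thesis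
    by (simp add: algebra_simps)
qed

lemma omega_iterate:
  assumes q: "norm q < 1" and z: "norm z \<le> (1 - norm q) / 2"
  shows "omega z q = (\<Sum>n<N. q ^ n / qpoch (z * q) (q\<^sup>2) (n + 1))
                    + q ^ N * omega (z * (q\<^sup>2) ^ N) q / qpoch (z * q) (q\<^sup>2) N"
proof (induction N)
  case 0
  then show ?case
    by simp
next
  case (Suc N)
  define w where "w = z * (q\<^sup>2) ^ N"
  define D where "D = qpoch (z * q) (q\<^sup>2) N"
  have w: "norm w \<le> (1 - norm q) / 2"
    unfolding w_def by (rule norm_mult_q2_power_le[OF q z])
  have D_Suc: "qpoch (z * q) (q\<^sup>2) (Suc N) = D * (1 - w * q)"
    by (simp add: qpoch_Suc D_def w_def mult_ac)
  have nonzero: "D * (1 - w * q) \<noteq> 0"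
    using norm_qpoch_ge_half[OF q z, of "Suc N"] D_Suc by auto
  have IH: "omega z q = (\<Sum>n<N. q ^ n / qpoch (z * q) (q\<^sup>2) (n + 1)) + q ^ N * omega w q / D"
    using Suc.IH by (simp only: w_def D_def)
  have "q ^ N / (D * (1 - w * q)) + q ^ Suc N * omega (w * q\<^sup>2) q / (D * (1 - w * q))
      = q ^ N * (1 + q * omega (w * q\<^sup>2) q) / (D * (1 - w * q))"
    by (simp add: add_divide_distrib algebra_simps)
  also have "\<dots> = q ^ N * omega w q / D"
    using nonzero by (simp add: omega_functional_equation[OF q w, symmetric])
  finally have step: "q ^ N * omega w q / D
      = q ^ N / (D * (1 - w * q)) + q ^ Suc N * omega (w * q\<^sup>2) q / (D * (1 - w * q))" ..
  have shift: "z * (q\<^sup>2) ^ Suc N = w * q\<^sup>2"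
    by (simp add: w_def mult_ac)
  show ?case
    unfolding D_Suc shift using IH step by (simp add: D_Suc add.assoc)
qed

lemma omega_remainder_tendsto_zero:
  assumes q: "norm q < 1" and z: "norm z \<le> (1 - norm q) / 2"
  shows "(\<lambda>N. q ^ N * omega (z * (q\<^sup>2) ^ N) q / qpoch (z * q) (q\<^sup>2) N) \<longlonglongrightarrow> 0"
proof (rule Lim_null_comparison)
  define B where "B = suminf (omega_majorant (norm q))"
  show "(\<lambda>N. 2 * B * norm q ^ N) \<longlonglongrightarrow> 0"
    using q by (intro tendsto_mult_right_zero LIMSEQ_power_zero) auto
  show "\<forall>\<^sub>F N in sequentially. norm (q ^ N * omega (z * (q\<^sup>2) ^ N) q / qpoch (z * q) (q\<^sup>2) N)
      \<le> 2 * B * norm q ^ N"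
  proof (intro always_eventually allI)
    fix N
    have omega_le: "norm (omega (z * (q\<^sup>2) ^ N) q) \<le> B"
      unfolding B_def by (rule norm_omega_le[OF q norm_mult_q2_power_le[OF q z]])
    have "0 \<le> B"
      using omega_le norm_ge_zero order_trans by blast
    then have "norm (omega (z * (q\<^sup>2) ^ N) q) / norm (qpoch (z * q) (q\<^sup>2) N) \<le> B / (1/2)"
      using omega_le norm_qpoch_ge_half[OF q z] by (intro frac_le) auto
    then have "norm q ^ N * (norm (omega (z * (q\<^sup>2) ^ N) q) / norm (qpoch (z * q) (q\<^sup>2) N))
        \<le> norm q ^ N * (B / (1/2))"
      by (rule mult_left_mono) simp
    then show "norm (q ^ N * omega (z * (q\<^sup>2) ^ N) q / qpoch (z * q) (q\<^sup>2) N)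
        \<le> 2 * B * norm q ^ N"
      by (simp add: norm_mult norm_divide norm_power mult.commute)
  qed
qed

theorem theorem2p1:
  fixes q :: complex
  assumes "norm q < 1"
  shows "\<exists>r>0. \<forall>z::complex. norm z < r \<longrightarrow>
           summable (omega_term z q) \<and>
           (\<lambda>n. q ^ n / qpoch (z * q) (q\<^sup>2) (n + 1)) sums omega z q"
proof (intro exI[of _ "(1 - norm q) / 2"] conjI allI impI)
  show "0 < (1 - norm q) / 2"
    using assms by simp
  fix z :: complex
  assume "norm z < (1 - norm q) / 2"
  then have z: "norm z \<le> (1 - norm q) / 2"
    by simp
  show "summable (omega_term z q)"
    by (rule summable_omega_term[OF assms z])
  define R where "R N = q ^ N * omega (z * (q\<^sup>2) ^ N) q / qpoch (z * q) (q\<^sup>2) N" for N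
  have "(\<lambda>N. omega z q - R N) \<longlonglongrightarrow> omega z q - 0"
    unfolding R_def by (intro tendsto_diff tendsto_const omega_remainder_tendsto_zero[OF assms z])
  moreover have "(\<Sum>n<N. q ^ n / qpoch (z * q) (q\<^sup>2) (n + 1)) = omega z q - R N" for N
    using omega_iterate[OF assms z, of N] by (simp add: R_def)
  ultimately show "(\<lambda>n. q ^ n / qpoch (z * q) (q\<^sup>2) (n + 1)) sums omega z q"
    by (simp add: sums_def)
qed

end
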